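(* If $U$ is a $5$-unitrade with $|U|=16$, then there exists an element that belongs to exactly $5$ or exactly $8$ blocks of $U$.
   Context: A $k$-unitrade on a finite set $V$ is a set $U$ of $k$-element subsets (blocks) of $V$ such that every $(k-1)$-element subset of $V$ is contained in an even number of blocks of $U$. *)

theory Defs
  imports Main
begin

definition unitrade :: "nat \<Rightarrow> 'a set \<Rightarrow> 'a set set \<Rightarrow> bool" where
  "unitrade k V U \<longleftrightarrow> finite V \<and> (\<forall>B\<in>U. B \<subseteq> V \<and> card B = k) \<and>
     (\<forall>T. T \<subseteq> V \<and> card T = k - 1 \<longrightarrow> even (card {B\<in>U. T \<subseteq> B}))"

end

theory Submission
  imports Defs
begin

(* Removing x from the blocks through x turns a k-unitrade into a (k-1)-unitrade, its link; by
   induction a nonempty k-unitrade has at least k+1 blocks, and each point of its support S lies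
   in at least k blocks.  Replacing each block B by S - B gives a family of (|S|-k)-sets of which
   every (|S|-k+1)-subset of S contains an even number, a cocycle.  Cocycles of 2-sets are
   complete bipartite graphs; for cocycles of 3-sets, parity on 4-sets ties degrees to codegrees.

   Suppose no point of the 5-unitrade U has degree 5 or 8.  Links are nonempty 4-unitrades, which
   have at least 5 blocks and, by the same analysis one dimension lower, never 6 or 7; so all
   degrees are at least 9 and 9|S| <= 5 * 16.  Sixteen 5-subsets need |S| >= 7.  For |S| = 7 the
   complements form a complete bipartite graph with 16 > 49/4 edges; for |S| = 8 they form a
   3-cocycle with 16 triples and all degrees at most 7, which counting around a point of degree
   at least 6 rules out. *)

definition degree :: "'a set set \<Rightarrow> 'a \<Rightarrow> nat" where
  "degree F x = card {t\<in>F. x \<in> t}"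

lemma card_filter_split:
  "finite A \<Longrightarrow> card {a\<in>A. P a} = card {a\<in>A. P a \<and> Q a} + card {a\<in>A. P a \<and> \<not> Q a}"
  by (subst card_Un_disjoint[symmetric]) (auto intro: arg_cong[where f = card])

lemma card_split_degree: "finite F \<Longrightarrow> card F = degree F x + card {t\<in>F. x \<notin> t}"
  unfolding degree_def using card_filter_split[of F "\<lambda>_. True" "\<lambda>t. x \<in> t"] by simp

lemma sum_degree:
  assumes "finite W" "finite F" "\<forall>t\<in>F. t \<subseteq> W \<and> card t = k"
  shows "(\<Sum>y\<in>W. degree F y) = k * card F"
  unfolding degree_def
proof (rule sum_multicount[OF assms(1,2)], intro ballI)
  fix t assume "t \<in> F"
  then have "{y\<in>W. y \<in> t} = t" using assms(3) by auto
  then show "card {y\<in>W. y \<in> t} = k" using assms(3) \<open>t \<in> F\<close> by simp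
qed

lemma card_le_binomial:
  assumes "finite S" "\<forall>B\<in>U. B \<subseteq> S \<and> card B = k"
  shows "card U \<le> card S choose k"
proof -
  have "card U \<le> card {B. B \<subseteq> S \<and> card B = k}"
    using assms by (intro card_mono) auto
  then show ?thesis using n_subsets[OF assms(1)] by simp
qed

lemma sum_eq_card_mult_imp_eq:
  fixes f :: "'a \<Rightarrow> nat"
  assumes "finite A" "\<forall>x\<in>A. c \<le> f x" "(\<Sum>x\<in>A. f x) = c * card A"
  shows "\<forall>x\<in>A. f x = c"
proof (rule ccontr)
  assume "\<not> ?thesis"
  then have "(\<Sum>x\<in>A. c) < (\<Sum>x\<in>A. f x)"
    using assms(1,2) by (intro sum_strict_mono_ex1) (auto, metis le_neq_implies_less)
  then show False using assms(3) by simp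
qed

section \<open>Unitrades and links\<close>

lemma unitrade_finite: "unitrade k V U \<Longrightarrow> finite U"
  unfolding unitrade_def by (meson Pow_iff finite_Pow_iff finite_subset subsetI)

lemma unitrade_block: "unitrade k V U \<Longrightarrow> B \<in> U \<Longrightarrow> B \<subseteq> V \<and> finite B \<and> card B = k"
  unfolding unitrade_def by (auto intro: finite_subset)

lemma unitrade_even:
  "unitrade k V U \<Longrightarrow> T \<subseteq> V \<Longrightarrow> card T = k - 1 \<Longrightarrow> even (card {B\<in>U. T \<subseteq> B})"
  unfolding unitrade_def by blast

lemma unitrade_Union:
  assumes "unitrade k V U"
  shows "finite (\<Union>U)" "\<Union>U \<subseteq> V" "\<forall>B\<in>U. B \<subseteq> \<Union>U \<and> card B = k"
  using assms unitrade_block unitrade_finite by blast+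

lemma unitrade_sum_degree:
  assumes "unitrade k V U"
  shows "(\<Sum>y\<in>\<Union>U. degree U y) = k * card U"
  using sum_degree[OF unitrade_Union(1)[OF assms] unitrade_finite[OF assms] unitrade_Union(3)[OF assms]] .

definition link :: "'a \<Rightarrow> 'a set set \<Rightarrow> 'a set set" where
  "link x U = (\<lambda>B. B - {x}) ` {B\<in>U. x \<in> B}"

lemma card_link: "card (link x U) = degree U x"
  unfolding link_def degree_def
  by (rule card_image, rule inj_onI) (metis (no_types, lifting) insert_Diff mem_Collect_eq)

lemma unitrade_link:
  assumes U: "unitrade (Suc k) V U" and k: "1 \<le> k" and x: "x \<in> V"
  shows "unitrade k (V - {x}) (link x U)"
proof -
  have "\<forall>C\<in>link x U. C \<subseteq> V - {x} \<and> card C = k"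
    using unitrade_block[OF U] unfolding link_def by auto
  moreover have "even (card {C\<in>link x U. T \<subseteq> C})" if T: "T \<subseteq> V - {x}" "card T = k - 1" for T
  proof -
    have "finite T" "x \<notin> T" using T U unfolding unitrade_def by (auto intro: finite_subset)
    then have "insert x T \<subseteq> V" "card (insert x T) = Suc k - 1" using T x k by auto
    then have "even (card {B\<in>U. insert x T \<subseteq> B})" by (rule unitrade_even[OF U])
    moreover have "{C\<in>link x U. T \<subseteq> C} = (\<lambda>B. B - {x}) ` {B\<in>U. insert x T \<subseteq> B}"
      unfolding link_def using \<open>x \<notin> T\<close> by auto
    moreover have "inj_on (\<lambda>B. B - {x}) {B\<in>U. insert x T \<subseteq> B}"
      by (rule inj_onI) (metis (no_types, lifting) insert_Diff insert_subset mem_Collect_eq)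
    ultimately show ?thesis by (simp add: card_image)
  qed
  ultimately show ?thesis using U unfolding unitrade_def by blast
qed

lemma unitrade_link_of_mem:
  assumes U: "unitrade (Suc k) V U" and k: "1 \<le> k" and y: "y \<in> \<Union>U"
  shows "unitrade k (V - {y}) (link y U)" and "link y U \<noteq> {}" and "card (link y U) = degree U y"
proof -
  have "y \<in> V" using y unitrade_block[OF U] by blast
  then show "unitrade k (V - {y}) (link y U)" using unitrade_link U k by simp
  show "link y U \<noteq> {}" using y unfolding link_def by auto
qed (rule card_link)

lemma unitrade_card_Union_gt:
  assumes U: "unitrade k V U" and k: "1 \<le> k" and B: "B \<in> U"
  shows "k < card (\<Union>U)"
proof -
  have B': "B \<subseteq> V" "finite B" "card B = k" using unitrade_block[OF U B] by auto
  have "\<Union>U \<noteq> B"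
  proof
    assume UB: "\<Union>U = B"
    have "U = {B}"
      using B card_subset_eq[OF B'(2)] unitrade_block[OF U] B'(3) UB by blast
    obtain z where "z \<in> B" using B'(3) k by fastforce
    then have "B - {z} \<subseteq> V" "card (B - {z}) = k - 1" using B' by auto
    then have "even (card {C\<in>U. B - {z} \<subseteq> C})" by (rule unitrade_even[OF U])
    moreover have "{C\<in>U. B - {z} \<subseteq> C} = {B}" using \<open>U = {B}\<close> by auto
    ultimately show False by simp
  qed
  then have "card B < card (\<Union>U)"
    using B unitrade_Union(1)[OF U] by (metis Union_upper psubsetI psubset_card_mono)
  then show ?thesis using B' by simp
qed

lemma unitrade_card_ge:
  assumes "unitrade k V U" "1 \<le> k" "U \<noteq> {}"
  shows "k + 1 \<le> card U"
  using assms
proof (induction k arbitrary: V U rule: less_induct)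
  case (less k)
  show ?case
  proof (cases "k = 1")
    case True
    then have "even (card {B\<in>U. {} \<subseteq> B})" using unitrade_even[OF less.prems(1), of "{}"] by simp
    moreover have "card U \<noteq> 0" using unitrade_finite[OF less.prems(1)] less.prems(3) by simp
    ultimately show ?thesis using True by simp presburger
  next
    case False
    then obtain j where j: "k = Suc j" "1 \<le> j" using less.prems(2) by (cases k) auto
    have "k \<le> degree U y" if y: "y \<in> \<Union>U" for y
    proof -
      have "unitrade j (V - {y}) (link y U)" "link y U \<noteq> {}" "card (link y U) = degree U y"
        using unitrade_link_of_mem[of j V U y] less.prems(1) y j by simp_all
      then show ?thesis using less.IH[of j "V - {y}" "link y U"] j by simp
    qed
    then have "k * card (\<Union>U) \<le> k * card U"
      using sum_mono[of "\<Union>U" "\<lambda>_. k" "degree U"] unitrade_sum_degree[OF less.prems(1)] by simp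
    then have "card (\<Union>U) \<le> card U" using j(1) mult_le_cancel1 by blast
    moreover obtain B where "B \<in> U" using less.prems(3) by blast
    ultimately show ?thesis using unitrade_card_Union_gt[OF less.prems(1,2)] by fastforce
  qed
qed

lemma unitrade_degree_ge:
  assumes U: "unitrade k V U" and k: "2 \<le> k" and y: "y \<in> \<Union>U"
  shows "k \<le> degree U y"
proof -
  obtain j where j: "k = Suc j" "1 \<le> j" using k by (cases k) auto
  have "unitrade j (V - {y}) (link y U)" "link y U \<noteq> {}" "card (link y U) = degree U y"
    using unitrade_link_of_mem[of j V U y] U y j by simp_all
  then show ?thesis using unitrade_card_ge[of j "V - {y}" "link y U"] j by simp
qed

section \<open>Cocycles\<close>

text \<open>Read as a cochain over GF(2), a cocycle has zero coboundary.\<close>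

definition cocycle :: "nat \<Rightarrow> 'a set \<Rightarrow> 'a set set \<Rightarrow> bool" where
  "cocycle k W F \<longleftrightarrow> finite W \<and> (\<forall>t\<in>F. t \<subseteq> W \<and> card t = k) \<and>
     (\<forall>Q. Q \<subseteq> W \<and> card Q = k + 1 \<longrightarrow> even (card {t\<in>F. t \<subseteq> Q}))"

lemma cocycle_finite: "cocycle k W F \<Longrightarrow> finite F"
  unfolding cocycle_def by (meson Pow_iff finite_Pow_iff finite_subset subsetI)

lemma cocycle_member: "cocycle k W F \<Longrightarrow> t \<in> F \<Longrightarrow> t \<subseteq> W \<and> finite t \<and> card t = k"
  unfolding cocycle_def by (auto intro: finite_subset)

lemma card_faces:
  assumes "finite Q" "\<forall>t\<in>F. t \<subseteq> Q \<longrightarrow> card t + 1 = card Q"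
  shows "card {t\<in>F. t \<subseteq> Q} = card {z\<in>Q. Q - {z} \<in> F}"
proof -
  have "{t\<in>F. t \<subseteq> Q} = (\<lambda>z. Q - {z}) ` {z\<in>Q. Q - {z} \<in> F}"
  proof (intro equalityI subsetI)
    fix t assume t: "t \<in> {t\<in>F. t \<subseteq> Q}"
    then have "card t + 1 = card Q" "finite t" using assms by (auto intro: finite_subset)
    then have "card (Q - t) = 1" using t by (simp add: card_Diff_subset)
    then obtain z where z: "Q - t = {z}" by (auto simp: card_1_singleton_iff)
    then have "t = Q - {z}" "z \<in> Q" using t by auto
    then show "t \<in> (\<lambda>z. Q - {z}) ` {z\<in>Q. Q - {z} \<in> F}" using t by auto
  next
    fix t assume "t \<in> (\<lambda>z. Q - {z}) ` {z\<in>Q. Q - {z} \<in> F}"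
    then show "t \<in> {t\<in>F. t \<subseteq> Q}" by auto
  qed
  moreover have "inj_on (\<lambda>z. Q - {z}) {z\<in>Q. Q - {z} \<in> F}" by (rule inj_onI) auto
  ultimately show ?thesis by (simp add: card_image)
qed

lemma cocycle_faces_even:
  assumes "cocycle k W F" "Q \<subseteq> W" "card Q = k + 1"
  shows "even (\<Sum>z\<in>Q. of_bool (Q - {z} \<in> F) :: nat)"
proof -
  have "finite Q" using assms unfolding cocycle_def by (auto intro: finite_subset)
  then have "(\<Sum>z\<in>Q. of_bool (Q - {z} \<in> F) :: nat) = card {t\<in>F. t \<subseteq> Q}"
    using card_faces[of Q F] assms unfolding cocycle_def by (simp add: Int_def)
  then show ?thesis using assms unfolding cocycle_def by simp
qed

lemma cocycle_2_parity:
  assumes "cocycle 2 W G" "{v,a,b} \<subseteq> W" "distinct [v,a,b]"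
  shows "({a,b} \<in> G) = (({v,a} \<in> G) \<noteq> ({v,b} \<in> G))"
proof -
  let ?Q = "{v,a,b}"
  have sum: "(\<Sum>z\<in>?Q. f z) = f v + f a + f b" for f :: "'a \<Rightarrow> nat"
    using assms(3) by (simp add: add.assoc)
  have "?Q - {v} = {a,b}" "?Q - {a} = {v,b}" "?Q - {b} = {v,a}" using assms(3) by auto
  then have "even (of_bool ({a,b} \<in> G) + of_bool ({v,b} \<in> G) + of_bool ({v,a} \<in> G) :: nat)"
    using cocycle_faces_even[OF assms(1,2)] assms(3) by (simp only: sum) simp
  then show ?thesis by (auto simp: of_bool_def split: if_splits)
qed

lemma cocycle_3_parity:
  assumes "cocycle 3 W F" "{x,a,b,c} \<subseteq> W" "distinct [x,a,b,c]"
  shows "{a,b,c} \<in> F \<longleftrightarrow> ({x,a,b} \<in> F \<longleftrightarrow> ({x,a,c} \<in> F \<longleftrightarrow> {x,b,c} \<in> F))"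
proof -
  let ?Q = "{x,a,b,c}"
  have sum: "(\<Sum>z\<in>?Q. f z) = f x + f a + f b + f c" for f :: "'a \<Rightarrow> nat"
    using assms(3) by (simp add: add.assoc)
  have "?Q - {x} = {a,b,c}" "?Q - {a} = {x,b,c}" "?Q - {b} = {x,a,c}" "?Q - {c} = {x,a,b}"
    using assms(3) by auto
  then have "even (of_bool ({a,b,c} \<in> F) + of_bool ({x,b,c} \<in> F) + of_bool ({x,a,c} \<in> F)
      + of_bool ({x,a,b} \<in> F) :: nat)"
    using cocycle_faces_even[OF assms(1,2)] assms(3) by (simp only: sum) simp
  then show ?thesis by (auto simp: of_bool_def split: if_splits)
qed

lemma card_cut:
  assumes "finite W" "A \<subseteq> W"
  shows "card {{a,b} | a b. a \<in> A \<and> b \<in> W - A} = card A * (card W - card A)"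
proof -
  have "{{a,b} | a b. a \<in> A \<and> b \<in> W - A} = (\<lambda>(a,b). {a,b}) ` (A \<times> (W - A))" by auto
  moreover have "inj_on (\<lambda>(a,b). {a,b}) (A \<times> (W - A))"
    by (rule inj_onI) (auto simp: doubleton_eq_iff)
  ultimately show ?thesis
    using assms by (simp add: card_image card_cartesian_product card_Diff_subset finite_subset)
qed

lemma cocycle_2_cut:
  assumes G: "cocycle 2 W G"
  obtains A where "A \<subseteq> W" "G = {{a,b} | a b. a \<in> A \<and> b \<in> W - A}"
proof (cases "W = {}")
  case True
  then have "G = {}" using G unfolding cocycle_def by fastforce
  then show ?thesis using that[of "{}"] by simp
next
  case False
  then obtain v where v: "v \<in> W" by blast
  define A where "A = {w\<in>W. w = v \<or> {v,w} \<notin> G}"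
  have AW: "A \<subseteq> W" unfolding A_def by blast
  have vA: "v \<in> A" using v unfolding A_def by simp
  have inA: "w \<in> A \<longleftrightarrow> {v,w} \<notin> G" if "w \<noteq> v" "w \<in> W" for w
    using that unfolding A_def by simp
  have edge: "{a,b} \<in> G \<longleftrightarrow> (a \<in> A \<longleftrightarrow> b \<notin> A)" if "a \<in> W" "b \<in> W" "a \<noteq> b" for a b
  proof -
    consider "a = v" | "b = v" | "v \<notin> {a,b}" by blast
    then show ?thesis
    proof cases
      case 1
      then show ?thesis using that vA inA[of b] by simp
    next
      case 2
      then show ?thesis using that vA inA[of a] by (simp add: insert_commute)
    next
      case 3
      then have "{v,a,b} \<subseteq> W" "distinct [v,a,b]" using that v by auto
      then have "({a,b} \<in> G) = (({v,a} \<in> G) \<noteq> ({v,b} \<in> G))" by (rule cocycle_2_parity[OF G])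
      moreover have "a \<in> A \<longleftrightarrow> {v,a} \<notin> G" "b \<in> A \<longleftrightarrow> {v,b} \<notin> G" using 3 that inA by auto
      ultimately show ?thesis by blast
    qed
  qed
  have "G = {{a,b} | a b. a \<in> A \<and> b \<in> W - A}"
  proof (intro equalityI subsetI)
    fix e assume "e \<in> G"
    then have "e \<subseteq> W" "card e = 2" using G unfolding cocycle_def by auto
    then obtain a b where e: "e = {a,b}" "a \<noteq> b" "a \<in> W" "b \<in> W"
      by (metis card_2_iff insert_subset)
    then have "a \<in> A \<longleftrightarrow> b \<notin> A" using edge \<open>e \<in> G\<close> by blast
    moreover have "e = {b,a}" using e(1) by blast
    ultimately show "e \<in> {{a,b} | a b. a \<in> A \<and> b \<in> W - A}"
      using e by (cases "a \<in> A") blast+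
  next
    fix e assume "e \<in> {{a,b} | a b. a \<in> A \<and> b \<in> W - A}"
    then obtain a b where "e = {a,b}" "a \<in> A" "b \<in> W - A" by blast
    moreover have "a \<noteq> b" "a \<in> W" using calculation AW by auto
    ultimately show "e \<in> G" using edge by blast
  qed
  with AW show ?thesis using that by blast
qed

lemma cocycle_2_card:
  assumes "cocycle 2 W G"
  obtains a where "a \<le> card W" "card G = a * (card W - a)"
proof -
  obtain A where A: "A \<subseteq> W" "G = {{a,b} | a b. a \<in> A \<and> b \<in> W - A}"
    using cocycle_2_cut[OF assms] .
  have "finite W" using assms unfolding cocycle_def by simp
  then have "card G = card A * (card W - card A)" "card A \<le> card W"
    using card_cut A card_mono by simp_all
  then show ?thesis using that by blast
qed

lemma cocycle_2_card_le:
  assumes "cocycle 2 W G"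
  shows "4 * card G \<le> card W * card W"
proof -
  obtain a where a: "a \<le> card W" "card G = a * (card W - a)" using cocycle_2_card[OF assms] .
  define b where "b = card W - a"
  have W: "card W = a + b" "card G = a * b" using a unfolding b_def by simp_all
  have "0 \<le> (int a - int b)\<^sup>2" by simp
  then have "int (4 * (a * b)) \<le> int ((a + b) * (a + b))" by (simp add: power2_eq_square algebra_simps)
  then show ?thesis unfolding W by linarith
qed

section \<open>Complements of a unitrade\<close>

definition complements :: "'a set \<Rightarrow> 'a set set \<Rightarrow> 'a set set" where
  "complements S U = (\<lambda>B. S - B) ` U"

lemma inj_on_complements: "\<forall>B\<in>U. B \<subseteq> S \<Longrightarrow> inj_on (\<lambda>B. S - B) U"
  by (rule inj_onI) (metis Diff_Diff_Int inf.absorb_iff2)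

lemma card_complements: "\<forall>B\<in>U. B \<subseteq> S \<Longrightarrow> card (complements S U) = card U"
  unfolding complements_def using inj_on_complements card_image by blast

lemma degree_complements:
  assumes "finite U" "\<forall>B\<in>U. B \<subseteq> S" "y \<in> S"
  shows "degree (complements S U) y + degree U y = card U"
proof -
  have "{t\<in>complements S U. y \<in> t} = (\<lambda>B. S - B) ` {B\<in>U. y \<notin> B}"
    unfolding complements_def using assms(3) by auto
  moreover have "inj_on (\<lambda>B. S - B) {B\<in>U. y \<notin> B}"
    using inj_on_complements[OF assms(2)] by (rule inj_on_subset) blast
  ultimately have "degree (complements S U) y = card {B\<in>U. True \<and> y \<notin> B}"
    unfolding degree_def by (simp add: card_image)
  then show ?thesis
    unfolding degree_def using card_filter_split[OF assms(1), of "\<lambda>_. True" "\<lambda>B. y \<in> B"] by simp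
qed

lemma unitrade_complements_cocycle:
  assumes U: "unitrade k V U" and k: "1 \<le> k" "k \<le> card S" and S: "S \<subseteq> V" "\<forall>B\<in>U. B \<subseteq> S"
  shows "cocycle (card S - k) S (complements S U)"
proof -
  have finS: "finite S" using U S(1) unfolding unitrade_def by (auto intro: finite_subset)
  have "t \<subseteq> S \<and> card t = card S - k" if t: "t \<in> complements S U" for t
  proof -
    obtain B where B: "B \<in> U" "t = S - B" using t unfolding complements_def by blast
    have "finite B" "card B = k" using unitrade_block[OF U B(1)] by simp_all
    moreover have "B \<subseteq> S" using S(2) B(1) by blast
    ultimately have "card (S - B) = card S - k" by (simp add: card_Diff_subset)
    then show ?thesis using B(2) by simp
  qed
  moreover have "even (card {t\<in>complements S U. t \<subseteq> Q})"
    if Q: "Q \<subseteq> S" "card Q = card S - k + 1" for Q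
  proof -
    have "card (S - Q) = k - 1" using Q finS k by (simp add: card_Diff_subset finite_subset)
    moreover have "S - Q \<subseteq> V" using S(1) by blast
    ultimately have "even (card {B\<in>U. S - Q \<subseteq> B})" using unitrade_even[OF U] by blast
    moreover have "{t\<in>complements S U. t \<subseteq> Q} = (\<lambda>B. S - B) ` {B\<in>U. S - Q \<subseteq> B}"
      unfolding complements_def using Q(1) by auto
    moreover have "inj_on (\<lambda>B. S - B) {B\<in>U. S - Q \<subseteq> B}"
      using inj_on_complements[OF S(2)] by (rule inj_on_subset) blast
    ultimately show ?thesis by (simp add: card_image)
  qed
  ultimately show ?thesis using finS unfolding cocycle_def by blast
qed

lemma unitrade_Union_complements:
  assumes U: "unitrade k V U" and k: "1 \<le> k" and S: "card (\<Union>U) = k + j"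
  shows "cocycle j (\<Union>U) (complements (\<Union>U) U)"
    and "card (complements (\<Union>U) U) = card U"
    and "\<forall>y\<in>\<Union>U. degree (complements (\<Union>U) U) y = card U - degree U y"
proof -
  show "cocycle j (\<Union>U) (complements (\<Union>U) U)"
    using unitrade_complements_cocycle[OF U k, of "\<Union>U"] unitrade_Union[OF U] S by simp
  show "card (complements (\<Union>U) U) = card U" by (rule card_complements) blast
  show "\<forall>y\<in>\<Union>U. degree (complements (\<Union>U) U) y = card U - degree U y"
    using degree_complements[OF unitrade_finite[OF U]] by (metis Union_upper add_diff_cancel_right')
qed

section \<open>Cocycles of 3-sets\<close>

lemma cocycle_3_memberE:
  assumes "cocycle 3 W F" "t \<in> F" "x \<in> t"
  obtains a b where "t = {x,a,b}" "distinct [x,a,b]" "a \<in> W" "b \<in> W"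
proof -
  have t: "t \<subseteq> W" "finite t" "card t = 3" using cocycle_member[OF assms(1,2)] by auto
  then have "card (t - {x}) = 2" using assms(3) by simp
  then obtain a b where ab: "t - {x} = {a,b}" "a \<noteq> b" by (meson card_2_iff)
  then have "t = {x,a,b}" using assms(3) by blast
  moreover have "distinct [x,a,b]" using ab by auto
  ultimately show ?thesis using that t(1) by simp
qed

lemma cocycle_3_triple:
  assumes "cocycle 3 W F" "{a,b,c} \<in> F"
  shows "distinct [a,b,c]" "{a,b,c} \<subseteq> W"
proof -
  have "card {a,b,c} = 3" using cocycle_member[OF assms] by simp
  then show "distinct [a,b,c]" by (auto simp: card_insert_if split: if_splits)
  show "{a,b,c} \<subseteq> W" using cocycle_member[OF assms] by simp
qed

definition pair_link :: "'a set \<Rightarrow> 'a set set \<Rightarrow> 'a \<Rightarrow> 'a \<Rightarrow> 'a set" where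
  "pair_link W F x u = {w\<in>W. {x,u,w} \<in> F}"

lemma pair_link_commute: "pair_link W F u x = pair_link W F x u"
  unfolding pair_link_def by (simp add: insert_commute)

lemma pair_link_subset: "cocycle 3 W F \<Longrightarrow> pair_link W F x u \<subseteq> W - {x,u}"
  unfolding pair_link_def using cocycle_3_triple(1) by fastforce

lemma card_pair_link_le:
  assumes F: "cocycle 3 W F" and x: "x \<in> W" and u: "u \<in> W" "u \<noteq> x"
  shows "card (pair_link W F x u) \<le> card W - 2"
proof -
  have "finite W" using F unfolding cocycle_def by simp
  then have "card (pair_link W F x u) \<le> card (W - {x,u})"
    using pair_link_subset[OF F] by (intro card_mono) auto
  then show ?thesis using \<open>finite W\<close> x u by (simp add: card_Diff_subset)
qed

lemma card_triples_containing_pair: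
  assumes F: "cocycle 3 W F" and "u \<noteq> x"
  shows "card {t\<in>F. x \<in> t \<and> u \<in> t} = card (pair_link W F x u)"
proof -
  have "{t\<in>F. x \<in> t \<and> u \<in> t} = (\<lambda>w. {x,u,w}) ` pair_link W F x u"
  proof (intro equalityI subsetI)
    fix t assume t: "t \<in> {t\<in>F. x \<in> t \<and> u \<in> t}"
    then obtain a b where ab: "t = {x,a,b}" "distinct [x,a,b]" "a \<in> W" "b \<in> W"
      using cocycle_3_memberE[OF F] by blast
    then consider "u = a" | "u = b" using t \<open>u \<noteq> x\<close> by auto
    then show "t \<in> (\<lambda>w. {x,u,w}) ` pair_link W F x u"
    proof cases
      case 1
      then show ?thesis using t ab unfolding pair_link_def by auto
    next
      case 2
      then have "t = {x,u,a}" using ab(1) by auto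
      then show ?thesis using t ab unfolding pair_link_def by auto
    qed
  qed (auto simp: pair_link_def)
  moreover have "inj_on (\<lambda>w. {x,u,w}) (pair_link W F x u)"
  proof (rule inj_onI)
    fix w w' assume "w \<in> pair_link W F x u" "w' \<in> pair_link W F x u" "{x,u,w} = {x,u,w'}"
    then show "w = w'" using pair_link_subset[OF F] by blast
  qed
  ultimately show ?thesis by (simp add: card_image)
qed

lemma degree_eq_pair_link:
  assumes "cocycle 3 W F" "u \<noteq> x"
  shows "degree F x = card (pair_link W F x u) + card {t\<in>F. x \<in> t \<and> u \<notin> t}"
  unfolding degree_def
  using card_filter_split[OF cocycle_finite[OF assms(1)], of "\<lambda>t. x \<in> t" "\<lambda>t. u \<in> t"]
    card_triples_containing_pair[OF assms] by simp

lemma card_pair_link_mult_le: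
  assumes F: "cocycle 3 W F" and x: "x \<in> W" and u: "u \<in> W" "u \<noteq> x"
  shows "card (pair_link W F x u) * card (W - {x,u} - pair_link W F x u)
    \<le> card {t\<in>F. x \<in> t \<longleftrightarrow> u \<notin> t}"
proof -
  define N where "N = pair_link W F x u"
  define R where "R = W - {x,u} - N"
  define E where "E = {t\<in>F. x \<in> t \<longleftrightarrow> u \<notin> t}"
  (* by parity on {x,u,a,b}, one of {x,a,b} and {u,a,b} is a triple *)
  define f where "f = (\<lambda>(a,b). if {x,a,b} \<in> F then {x,a,b} else {u,a,b})"
  have NW: "N \<subseteq> W - {x,u}" unfolding N_def by (rule pair_link_subset[OF F])
  have R: "N \<inter> R = {}" "R \<subseteq> W - {x,u}" unfolding R_def by auto
  have f_pair: "f (a,b) - {x,u} = {a,b}" if "a \<in> N" "b \<in> R" for a b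
    using that NW R unfolding f_def by auto
  have f_mem: "f (a,b) \<in> E" if ab: "a \<in> N" "b \<in> R" for a b
  proof (cases "{x,a,b} \<in> F")
    case True
    then show ?thesis using ab NW R u(2) unfolding f_def E_def by auto
  next
    case False
    have "{x,u,a} \<in> F" "{x,u,b} \<notin> F" using ab unfolding N_def R_def pair_link_def by auto
    moreover have "{x,u,a,b} \<subseteq> W" "distinct [x,u,a,b]" using ab NW R x u by auto
    ultimately have "{u,a,b} \<in> F" using False cocycle_3_parity[OF F, of x u a b] by simp
    then show ?thesis using False ab NW R unfolding f_def E_def by auto
  qed
  have "inj_on f (N \<times> R)"
  proof (rule inj_onI, clarify)
    fix a b a' b' assume ab: "a \<in> N" "b \<in> R" "a' \<in> N" "b' \<in> R" "f (a,b) = f (a',b')"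
    then have "{a,b} = {a',b'}" using f_pair by metis
    then show "a = a' \<and> b = b'" using ab(1-4) R(1) by (auto simp: doubleton_eq_iff)
  qed
  then have "card (N \<times> R) \<le> card E"
  proof (rule card_inj_on_le)
    show "f ` (N \<times> R) \<subseteq> E" using f_mem by auto
    show "finite E" unfolding E_def using cocycle_finite[OF F] by simp
  qed
  then show ?thesis unfolding N_def R_def E_def by (simp add: card_cartesian_product)
qed

lemma pair_link_degree_bound:
  assumes F: "cocycle 3 W F" and x: "x \<in> W" and u: "u \<in> W" "u \<noteq> x"
  shows "card (pair_link W F x u) * (card W - card (pair_link W F x u)) \<le> degree F x + degree F u"
proof -
  define N where "N = pair_link W F x u"
  define E where "E = {t\<in>F. x \<in> t \<longleftrightarrow> u \<notin> t}"
  have finW: "finite W" using F unfolding cocycle_def by simp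
  have NW: "N \<subseteq> W - {x,u}" unfolding N_def by (rule pair_link_subset[OF F])
  have "degree F x + degree F u = 2 * card N + card E"
  proof -
    have "{t\<in>F. (x \<in> t \<longleftrightarrow> u \<notin> t) \<and> x \<in> t} = {t\<in>F. x \<in> t \<and> u \<notin> t}"
      "{t\<in>F. (x \<in> t \<longleftrightarrow> u \<notin> t) \<and> x \<notin> t} = {t\<in>F. u \<in> t \<and> x \<notin> t}" by auto
    then have "card E = card {t\<in>F. x \<in> t \<and> u \<notin> t} + card {t\<in>F. u \<in> t \<and> x \<notin> t}"
      using card_filter_split[OF cocycle_finite[OF F], of "\<lambda>t. x \<in> t \<longleftrightarrow> u \<notin> t" "\<lambda>t. x \<in> t"]
      unfolding E_def by simp
    then show ?thesis
      using degree_eq_pair_link[OF F u(2)] degree_eq_pair_link[OF F u(2)[symmetric]]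
      unfolding N_def pair_link_commute[of W F u x] by simp
  qed
  moreover have "card W - card N = card (W - {x,u} - N) + 2"
  proof -
    have "2 \<le> card W" using card_mono[OF finW, of "{x,u}"] x u by simp
    moreover have "card (W - {x,u}) = card W - 2" using x u finW by (simp add: card_Diff_subset)
    ultimately show ?thesis using NW finW card_mono[of "W - {x,u}" N]
      by (simp add: card_Diff_subset finite_subset)
  qed
  ultimately show ?thesis
    using card_pair_link_mult_le[OF F x u] unfolding N_def[symmetric] E_def[symmetric]
    by (simp add: algebra_simps)
qed

lemma card_opposite_points_ge:
  assumes F: "cocycle 3 W F" and p: "p \<in> F" "p = {x,a,b}" "distinct [x,a,b]"
    and D: "\<forall>u\<in>W - {x}. card (pair_link W F x u) \<le> D"
  shows "card W - 1 - 2 * D \<le> card {z\<in>W - p. \<forall>y\<in>p - {x}. {x,y,z} \<notin> F}"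
proof -
  define Na where "Na = pair_link W F x a"
  define Nb where "Nb = pair_link W F x b"
  have finW: "finite W" using F unfolding cocycle_def by simp
  have pW: "p \<subseteq> W" using cocycle_member[OF F p(1)] by simp
  have "{z\<in>W - p. \<forall>y\<in>p - {x}. {x,y,z} \<notin> F} = W - p - (Na - {b}) - (Nb - {a})"
    unfolding Na_def Nb_def pair_link_def using p(2,3) by auto
  moreover have "b \<in> Na" "a \<in> Nb" using p pW unfolding Na_def Nb_def pair_link_def
    by (auto simp: insert_commute)
  moreover have "card Na \<le> D" "card Nb \<le> D" using D p(2,3) pW unfolding Na_def Nb_def by auto
  moreover have "finite Na" "finite Nb" using finW unfolding Na_def Nb_def pair_link_def by auto
  moreover have "1 \<le> card Na" "1 \<le> card Nb"
    using calculation(2-3,6-7) by (simp_all add: Suc_le_eq card_gt_0_iff) blast+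
  moreover have "card (W - p) = card W - 3" using pW finW cocycle_member[OF F p(1)]
    by (simp add: card_Diff_subset)
  ultimately show ?thesis
    using diff_card_le_card_Diff[of "Na - {b}" "W - p"]
      diff_card_le_card_Diff[of "Nb - {a}" "W - p - (Na - {b})"]
    by simp
qed

lemma opposite_triangle_mem:
  assumes F: "cocycle 3 W F" and x: "x \<in> W" and p: "p \<in> F" "x \<in> p"
    and z: "z \<in> W - p" "\<forall>y\<in>p - {x}. {x,y,z} \<notin> F"
  shows "insert z (p - {x}) \<in> F"
proof -
  obtain a b where ab: "p = {x,a,b}" "distinct [x,a,b]" "a \<in> W" "b \<in> W"
    using cocycle_3_memberE[OF F p] by blast
  then have "{x,a,b,z} \<subseteq> W" "distinct [x,a,b,z]" "{x,a,z} \<notin> F" "{x,b,z} \<notin> F"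
    using x z by auto
  then have "{a,b,z} \<in> F" using cocycle_3_parity[OF F, of x a b z] p(1) ab(1) by simp
  moreover have "insert z (p - {x}) = {a,b,z}" using ab by auto
  ultimately show ?thesis by simp
qed

(* the pair p - {x} is the only pair of the triangle that spans a triple with x,
   so the triangle determines p and z *)
lemma inj_on_opposite_triangles:
  assumes F: "cocycle 3 W F"
  shows "inj_on (\<lambda>(p,z). insert z (p - {x}))
    (SIGMA p:{t\<in>F. x \<in> t}. {z\<in>W - p. \<forall>y\<in>p - {x}. {x,y,z} \<notin> F})"
proof (rule inj_onI, clarify)
  fix p z p' z'
  assume p: "p \<in> F" "x \<in> p" "z \<in> W" "z \<notin> p" "\<forall>y\<in>p - {x}. {x,y,z} \<notin> F"
    and p': "p' \<in> F" "x \<in> p'" "z' \<notin> p'"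
    and eq: "insert z (p - {x}) = insert z' (p' - {x})"
  show "p = p' \<and> z = z'"
  proof (cases "z = z'")
    case True
    then have "p - {x} = p' - {x}" using eq p(4) p'(3) by (simp add: insert_ident)
    then show ?thesis using True p(2) p'(2) by (metis insert_Diff)
  next
    case False
    then have "z \<in> p' - {x}" using eq p(2,4) by blast
    moreover obtain a b where ab: "p' = {x,a,b}" "distinct [x,a,b]"
      using cocycle_3_memberE[OF F p'(1,2)] by blast
    ultimately obtain y where y: "{x,y,z} = p'" "y \<noteq> z" "y \<noteq> x"
      by (auto simp: insert_commute)
    then have "y \<in> p - {x}" using eq by blast
    then show ?thesis using p(5) p'(1) y(1) by blast
  qed
qed

lemma card_ge_of_pair_link_le:
  assumes F: "cocycle 3 W F" and x: "x \<in> W"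
    and D: "\<forall>u\<in>W - {x}. card (pair_link W F x u) \<le> D"
  shows "degree F x * (card W - 1 - 2 * D) + degree F x \<le> card F"
proof -
  define Fx where "Fx = {t\<in>F. x \<in> t}"
  define Z where "Z p = {z\<in>W - p. \<forall>y\<in>p - {x}. {x,y,z} \<notin> F}" for p
  define g where "g = (\<lambda>(p,z). insert z (p - {x}))"
  have finF: "finite F" using cocycle_finite[OF F] .
  have finW: "finite W" using F unfolding cocycle_def by simp
  have g_mem: "g (p,z) \<in> {t\<in>F. x \<notin> t}" if "p \<in> Fx" "z \<in> Z p" for p z
    using opposite_triangle_mem[OF F x] that unfolding g_def Fx_def Z_def by auto
  have "inj_on g (Sigma Fx Z)"
    unfolding g_def Fx_def Z_def by (rule inj_on_opposite_triangles[OF F])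
  then have "card (Sigma Fx Z) \<le> card {t\<in>F. x \<notin> t}"
    using g_mem finF by (intro card_inj_on_le) auto
  moreover have "card (Sigma Fx Z) = (\<Sum>p\<in>Fx. card (Z p))"
    using finF finW unfolding Fx_def Z_def by (intro card_SigmaI) auto
  moreover have "degree F x * (card W - 1 - 2 * D) \<le> (\<Sum>p\<in>Fx. card (Z p))"
  proof -
    have "card W - 1 - 2 * D \<le> card (Z p)" if p: "p \<in> Fx" for p
    proof -
      obtain a b where "p = {x,a,b}" "distinct [x,a,b]"
        using cocycle_3_memberE[OF F] p unfolding Fx_def by blast
      then show ?thesis using card_opposite_points_ge[OF F _ _ _ D] p unfolding Z_def Fx_def by blast
    qed
    then show ?thesis using sum_mono[of Fx "\<lambda>_. card W - 1 - 2 * D" "\<lambda>p. card (Z p)"]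
      unfolding degree_def Fx_def by simp
  qed
  ultimately show ?thesis using card_split_degree[OF finF, of x] by linarith
qed

lemma full_pair_link_coverE:
  assumes F: "cocycle 3 W F" and x: "x \<in> W" and u: "u \<noteq> x"
    and full: "pair_link W F x u = W - {x,u}" and t: "t \<in> F" "x \<notin> t"
  obtains b c z where "t = {z,b,c}" "{x,b,c} \<in> F" "u \<notin> {b,c}"
proof -
  have "t \<noteq> {}" using cocycle_member[OF F t(1)] by auto
  (* if u lies in t it plays the role of a: then {x,u,b} and {x,u,c} are triples by fullness,
     and parity forces {x,b,c} *)
  then obtain a where a: "a \<in> t" "u \<in> t \<longrightarrow> a = u" by blast
  then obtain b c where "t = {a,b,c}" "distinct [a,b,c]"
    using cocycle_3_memberE[OF F t(1)] by blast
  then have abc: "t = {a,b,c}" "distinct [a,b,c]" "u \<notin> {b,c}" using a(2) by auto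
  have W: "{x,a,b,c} \<subseteq> W" "distinct [x,a,b,c]"
    using abc t cocycle_member[OF F t(1)] x by auto
  have par: "{x,a,b} \<in> F \<longleftrightarrow> ({x,a,c} \<in> F \<longleftrightarrow> {x,b,c} \<in> F)"
    using cocycle_3_parity[OF F W] abc(1) t(1) by simp
  consider "{x,b,c} \<in> F" | "{x,a,b} \<in> F" "u \<noteq> a" | "{x,a,c} \<in> F" "u \<noteq> a"
  proof (cases "u = a")
    case True
    then have "{x,a,b} \<in> F" "{x,a,c} \<in> F" using full W unfolding pair_link_def by auto
    then show ?thesis using par that by blast
  qed (use par in blast)
  then show ?thesis
  proof cases
    case 1
    then show ?thesis using that abc by blast
  next
    case 2
    then show ?thesis using that[of c a b] abc by (auto simp: insert_commute)
  next
    case 3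
    then show ?thesis using that[of b a c] abc by (auto simp: insert_commute)
  qed
qed

lemma card_le_of_full_pair_link:
  assumes F: "cocycle 3 W F" and x: "x \<in> W" and u: "u \<noteq> x"
    and full: "pair_link W F x u = W - {x,u}"
  shows "card F \<le> degree F x + card {t\<in>F. x \<in> t \<and> u \<notin> t} * (card W - 3)"
proof -
  define P where "P = {t\<in>F. x \<in> t \<and> u \<notin> t}"
  have finF: "finite F" using cocycle_finite[OF F] .
  have finW: "finite W" using F unfolding cocycle_def by simp
  have "{t\<in>F. x \<notin> t} \<subseteq> (\<lambda>(p,z). insert z (p - {x})) ` (SIGMA p:P. W - p)"
  proof
    fix t assume "t \<in> {t\<in>F. x \<notin> t}"
    then have t: "t \<in> F" "x \<notin> t" by auto
    obtain b c z where bcz: "t = {z,b,c}" "{x,b,c} \<in> F" "u \<notin> {b,c}"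
      by (rule full_pair_link_coverE[OF F x u full t])
    have "distinct [z,b,c]" using cocycle_3_triple(1)[OF F] t(1) bcz(1) by simp
    moreover have "z \<in> W" using cocycle_member[OF F t(1)] bcz(1) by simp
    moreover have "x \<noteq> z" "x \<noteq> b" "x \<noteq> c" using t(2) bcz(1) by auto
    ultimately have "({x,b,c}, z) \<in> (SIGMA p:P. W - p)" using bcz(2,3) u unfolding P_def by auto
    moreover have "t = insert z ({x,b,c} - {x})" using bcz(1) \<open>x \<noteq> b\<close> \<open>x \<noteq> c\<close> by auto
    ultimately show "t \<in> (\<lambda>(p,z). insert z (p - {x})) ` (SIGMA p:P. W - p)"
      by (intro image_eqI[where x = "({x,b,c}, z)"]) simp_all
  qed
  then have "card {t\<in>F. x \<notin> t} \<le> card (SIGMA p:P. W - p)"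
    using finW finF unfolding P_def by (intro surj_card_le) auto
  also have "\<dots> = (\<Sum>p\<in>P. card (W - p))"
    using finW finF unfolding P_def by (intro card_SigmaI) auto
  also have "\<dots> = card P * (card W - 3)"
    using cocycle_member[OF F] finW unfolding P_def by (simp add: card_Diff_subset)
  finally show ?thesis using card_split_degree[OF finF, of x] unfolding P_def by linarith
qed

lemma cocycle_3_on_7_points_not_3_regular:
  assumes F: "cocycle 3 W F" and W: "card W = 7"
  shows "\<exists>y\<in>W. degree F y \<noteq> 3"
proof (rule ccontr)
  assume "\<not> ?thesis"
  then have deg: "\<forall>y\<in>W. degree F y = 3" by blast
  have finW: "finite W" using F unfolding cocycle_def by simp
  have "3 * card F = 21"
    using sum_degree[OF finW cocycle_finite[OF F], of 3] cocycle_member[OF F] deg W by simp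
  moreover obtain x where x: "x \<in> W" using W by fastforce
  moreover have "card (pair_link W F x u) \<le> 1" if u: "u \<in> W - {x}" for u
  proof -
    define d where "d = card (pair_link W F x u)"
    have "d * (7 - d) \<le> 6" "d \<le> 5"
      using pair_link_degree_bound[OF F x] card_pair_link_le[OF F x] deg u x W unfolding d_def by auto
    then have "d = 0 \<or> d = 1 \<or> d = 2 \<or> d = 3 \<or> d = 4 \<or> d = 5" by arith
    then show ?thesis using \<open>d * (7 - d) \<le> 6\<close> unfolding d_def[symmetric] by auto
  qed
  ultimately show False using card_ge_of_pair_link_le[OF F x, of 1] deg W by simp
qed

lemma pair_link_dichotomy:
  assumes F: "cocycle 3 W F" and W: "card W = 8" and x: "x \<in> W" and u: "u \<in> W" "u \<noteq> x"
    and deg: "degree F x \<le> 7" "degree F u \<le> 7"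
  shows "card (pair_link W F x u) \<le> 2 \<or> card (pair_link W F x u) = 6"
proof -
  define d where "d = card (pair_link W F x u)"
  have "d * (8 - d) \<le> 14" "d \<le> 6"
    using pair_link_degree_bound[OF F x u] card_pair_link_le[OF F x u] deg W unfolding d_def by simp_all
  then have "d = 0 \<or> d = 1 \<or> d = 2 \<or> d = 3 \<or> d = 4 \<or> d = 5 \<or> d = 6" by arith
  then show ?thesis using \<open>d * (8 - d) \<le> 14\<close> unfolding d_def[symmetric] by auto
qed

lemma cocycle_3_on_8_points_card_16_degree_ge_8:
  assumes F: "cocycle 3 W F" and W: "card W = 8" and card: "card F = 16"
  shows "\<exists>y\<in>W. 8 \<le> degree F y"
proof (rule ccontr)
  assume "\<not> ?thesis"
  then have deg: "\<forall>y\<in>W. degree F y \<le> 7" by auto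
  have finW: "finite W" using F unfolding cocycle_def by simp
  have sum: "(\<Sum>y\<in>W. degree F y) = 48"
    using sum_degree[OF finW cocycle_finite[OF F], of 3] cocycle_member[OF F] card by simp
  obtain x where x: "x \<in> W" "6 \<le> degree F x"
  proof (rule ccontr)
    assume "\<not> thesis"
    then have "\<forall>y\<in>W. degree F y \<le> 5" using that by force
    then have "(\<Sum>y\<in>W. degree F y) \<le> 5 * card W" using sum_bounded_above[of W "degree F" 5] by simp
    then show False using sum W by simp
  qed
  define e where "e = degree F x"
  have e: "6 \<le> e" "e \<le> 7" using x deg unfolding e_def by auto
  have d: "card (pair_link W F x u) \<le> 2 \<or> card (pair_link W F x u) = 6" if "u \<in> W - {x}" for u
    using pair_link_dichotomy[OF F W x(1)] deg x(1) that by simp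
  show False
  proof (cases "\<exists>u\<in>W - {x}. card (pair_link W F x u) = 6")
    case True
    then obtain u where u: "u \<in> W" "u \<noteq> x" "card (pair_link W F x u) = 6" by blast
    have "card (W - {x,u}) = 6" using finW u x W by (simp add: card_Diff_subset)
    then have "pair_link W F x u = W - {x,u}"
      using pair_link_subset[OF F] u(3) finW by (metis card_subset_eq finite_Diff)
    then have "card F \<le> e + (e - 6) * 5"
      using card_le_of_full_pair_link[OF F x(1) u(2)] degree_eq_pair_link[OF F u(2)] u(3) W
      unfolding e_def by simp
    then show False using card e by simp
  next
    case False
    then have "\<forall>u\<in>W - {x}. card (pair_link W F x u) \<le> 2" using d by blast
    then have "e * 3 + e \<le> card F"
      using card_ge_of_pair_link_le[OF F x(1), of 2] W unfolding e_def by simp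
    then show False using card e by simp
  qed
qed

section \<open>Sizes of 4- and 5-unitrades\<close>

lemma unitrade_4_card_not_6_7:
  assumes U: "unitrade 4 V U" and ne: "U \<noteq> {}"
  shows "card U \<noteq> 6 \<and> card U \<noteq> 7"
proof (rule ccontr)
  assume "\<not> ?thesis"
  then have cardU: "card U = 6 \<or> card U = 7" by blast
  define S where "S = \<Union>U"
  have S: "finite S" "\<forall>B\<in>U. B \<subseteq> S \<and> card B = 4"
    using unitrade_Union[OF U] unfolding S_def by auto
  have deg: "\<forall>y\<in>S. 4 \<le> degree U y" using unitrade_degree_ge[OF U] unfolding S_def by simp
  have sum: "(\<Sum>y\<in>S. degree U y) = 4 * card U" using unitrade_sum_degree[OF U] unfolding S_def .
  then have "4 * card S \<le> 4 * card U" using sum_mono[of S "\<lambda>_. 4" "degree U"] deg by simp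
  moreover have "4 < card S" using unitrade_card_Union_gt[OF U] ne unfolding S_def by fastforce
  ultimately consider "card S = 5" | "card S = 6" | "card S = 7" "card U = 7" using cardU by linarith
  then show False
  proof cases
    case 1
    then show False using card_le_binomial[OF S] cardU by (simp add: numeral_eq_Suc)
  next
    case 2
    then have "cocycle 2 S (complements S U)" "card (complements S U) = card U"
      using unitrade_Union_complements[OF U, of 2] unfolding S_def by simp_all
    then obtain a where "a \<le> 6" "card U = a * (6 - a)" using cocycle_2_card 2 by metis
    moreover have "a = 0 \<or> a = 1 \<or> a = 2 \<or> a = 3 \<or> a = 4 \<or> a = 5 \<or> a = 6" using \<open>a \<le> 6\<close> by arith
    ultimately show False using cardU by auto
  next
    case 3
    have "\<forall>y\<in>S. degree U y = 4" using sum_eq_card_mult_imp_eq[OF S(1) deg] sum 3 by simp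
    moreover have "cocycle 3 S (complements S U)"
      "\<forall>y\<in>S. degree (complements S U) y = card U - degree U y"
      using unitrade_Union_complements[OF U, of 3] 3 unfolding S_def by simp_all
    ultimately show False using cocycle_3_on_7_points_not_3_regular 3 by fastforce
  qed
qed

lemma unitrade_5_degree_ge_9:
  assumes U: "unitrade 5 V U" and y: "y \<in> \<Union>U" and not58: "degree U y \<noteq> 5" "degree U y \<noteq> 8"
  shows "9 \<le> degree U y"
proof -
  have L: "unitrade 4 (V - {y}) (link y U)" "link y U \<noteq> {}" "card (link y U) = degree U y"
    using unitrade_link_of_mem[of 4 V U y] U y by simp_all
  have "5 \<le> card (link y U)" using unitrade_card_ge[OF L(1) _ L(2)] by simp
  moreover have "card (link y U) \<noteq> 6 \<and> card (link y U) \<noteq> 7" using unitrade_4_card_not_6_7[OF L(1,2)] .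
  ultimately show ?thesis using not58 L(3) by fastforce
qed

theorem proposition15:
  fixes V :: "'a set" and U :: "'a set set"
  assumes "unitrade 5 V U" and "card U = 16"
  shows "\<exists>x\<in>V. card {B\<in>U. x \<in> B} = 5 \<or> card {B\<in>U. x \<in> B} = 8"
proof (rule ccontr)
  assume no58: "\<not> ?thesis"
  note U = assms(1)
  define S where "S = \<Union>U"
  have deg: "9 \<le> degree U y" if y: "y \<in> S" for y
  proof -
    have "y \<in> V" using unitrade_Union(2)[OF U] y unfolding S_def by blast
    then have "degree U y \<noteq> 5" "degree U y \<noteq> 8" using no58 unfolding degree_def by auto
    then show ?thesis using unitrade_5_degree_ge_9[OF U] y unfolding S_def by blast
  qed
  then have "9 * card S \<le> 5 * card U"
    using sum_mono[of S "\<lambda>_. 9" "degree U"] unitrade_sum_degree[OF U] unfolding S_def by simp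
  moreover have "16 \<le> card S choose 5"
    using card_le_binomial[OF unitrade_Union(1,3)[OF U]] assms(2) unfolding S_def by simp
  then have "7 \<le> card S"
    using binomial_right_mono[of "card S" 6 5] by (cases "card S \<le> 6") (simp_all add: numeral_eq_Suc)
  ultimately consider "card S = 7" | "card S = 8" using assms(2) by linarith
  then show False
  proof cases
    case 1
    then have "cocycle 2 S (complements S U)" "card (complements S U) = 16"
      using unitrade_Union_complements[OF U, of 2] assms(2) unfolding S_def by simp_all
    then show False using cocycle_2_card_le 1 by fastforce
  next
    case 2
    then have "cocycle 3 S (complements S U)" "card (complements S U) = 16"
      "\<forall>y\<in>S. degree (complements S U) y = 16 - degree U y"
      using unitrade_Union_complements[OF U, of 3] assms(2) unfolding S_def by simp_all
    then show False using cocycle_3_on_8_points_card_16_degree_ge_8[OF _ 2] deg by fastforce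
  qed
qed

end
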